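(* Let $(X,d)$ be a compact metric space whose open balls are connected and let $\lambda\in(0,1)$. Let $U\subset\mathbb{R}^M$ be a set of positive Lebesgue measure and let $\{f_\mu\}_{\mu\in U}$ be a family of piecewise $\lambda$-contractions on $X$ which satisfies Hypothesis (E) and Hypothesis (T) at some $\mu^*\in U$. Then there exists $\delta>0$ such that for Lebesgue almost every $\mu\in U\cap B_\delta(\mu^* )$ the map $f_\mu$ is asymptotically periodic on $Z_\mu$, the set of regular points of $f_\mu$.
   Context: A map $f\colon X\to X$ is a piecewise $\lambda$-contraction if there exist $N\in\mathbb{N}$, open, connected, pairwise disjoint sets $A_1,\dots,A_N\subset X$ whose union $X'$ is dense in $X$, and bi-Lipschitz maps $\varphi_1,\dots,\varphi_N\colon X\to X$ with Lipschitz constants $\le\lambda$ such that $f|_{A_i}=\varphi_i|_{A_i}$ for each $i$. $\mathcal{A}=\{1,\dots,N\}$ is the label set, $\{A_i\}$ the partition, $\{\varphi_i\}$ the associated iterated function system, and $S(f)=X\setminus X'$ the singular set. A point $x$ is regular of order $n$ if $f^j(x)\notin S(f)$ for $0\le j<n$, and regular if this holds for all $n$; $Z(f)$ is the set of regular points. For $x$ regular of order $n$, its itinerary of order $n$ is $(i_0,\dots,i_{n-1})\in\mathcal{A}^n$ with $f^j(x)\in A_{i_j}$; $\mathcal{I}_n(f)$ denotes the set of all itineraries of order $n$. For $Y\subset X$ forward invariant, $\omega(f,Y)=\bigcup_{x\in Y}\omega(f,x)$, where $\omega(f,x)=\bigcap_{m\ge1}\overline{\bigcup_{n\ge m}\{f^n(x)\}}$;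 $f$ is asymptotically periodic on $Y$ if $\omega(f,Y)$ is a union of finitely many periodic orbits. A family of piecewise $\lambda$-contractions $\{f_\mu\}_{\mu\in U}$ means: there is $N$ such that each $f_\mu$ is a piecewise $\lambda$-contraction on $X$ with label set $\mathcal{A}=\{1,\dots,N\}$, with partition $\{A_{i,\mu}\}$ and IFS $\{\varphi_{i,\mu}\}$. Write $S_\mu=S(f_\mu)$, $Z_\mu=Z(f_\mu)$, and for $\alpha=(i_0,\dots,i_{n-1})\in\mathcal{A}^n$, $\varphi^\alpha_\mu=\varphi_{i_{n-1},\mu}\circ\cdots\circ\varphi_{i_0,\mu}$. For $\delta>0$ let $U_\delta(\mu^* )=U\cap B_\delta(\mu^* )$ ($B_\delta$ the open Euclidean ball) and $\mathcal{J}^\delta_n(\mu^* )=\bigcup_{\mu\in U_\delta(\mu^* )}\mathcal{I}_n(f_\mu)$. Hypothesis (E) at $\mu^*$: $\lim_{\delta\to0^+}\limsup_{n\to\infty}\frac1n\log\#\mathcal{J}_n^\delta(\mu^* )=0$. Hypothesis (T) at $\mu^*$: there exist $x_0\in X$, $\varepsilon_0>0$, $\delta_0>0$, $n_0\ge1$, $a>0$, $c>0$ such that for all $0<\varepsilon<\varepsilon_0$, $n\ge n_0$ and $\alpha\in\mathcal{J}^{\delta_0}_n(\mu^* )$, $\mathrm{Leb}^*(\{\mu\in U_{\delta_0}(\mu^* ): d(\varphi^\alpha_\mu(x_0),S_\mu)\le\varepsilon\})\le c\,\varepsilon^a$, where $\mathrm{Leb}^*$ is Lebesgue outer measure and $d(x,S)=\inf_{s\in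 S}d(x,s)$. *)

theory Defs
  imports "HOL-Analysis.Analysis"
begin

definition bi_lipschitz_le :: "'a::metric_space set \<Rightarrow> real \<Rightarrow> ('a \<Rightarrow> 'a) \<Rightarrow> bool" where
  "bi_lipschitz_le X lam g \<longleftrightarrow>
     g ` X \<subseteq> X \<and>
     (\<exists>c>0. \<forall>x\<in>X. \<forall>y\<in>X. c * dist x y \<le> dist (g x) (g y) \<and> dist (g x) (g y) \<le> lam * dist x y)"

definition pw_contraction ::
  "'a::metric_space set \<Rightarrow> real \<Rightarrow> nat \<Rightarrow> ('a \<Rightarrow> 'a) \<Rightarrow> (nat \<Rightarrow> 'a set) \<Rightarrow> (nat \<Rightarrow> 'a \<Rightarrow> 'a) \<Rightarrow> bool" where
  "pw_contraction X lam N f A phi \<longleftrightarrow>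
     f ` X \<subseteq> X \<and>
     (\<forall>i\<in>{1..N}. openin (top_of_set X) (A i) \<and> connected (A i)) \<and>
     (\<forall>i\<in>{1..N}. \<forall>j\<in>{1..N}. i \<noteq> j \<longrightarrow> A i \<inter> A j = {}) \<and>
     X \<subseteq> closure (\<Union>i\<in>{1..N}. A i) \<and>
     (\<forall>i\<in>{1..N}. bi_lipschitz_le X lam (phi i)) \<and>
     (\<forall>i\<in>{1..N}. \<forall>x\<in>A i. f x = phi i x)"

definition singular_set :: "'a set \<Rightarrow> nat \<Rightarrow> (nat \<Rightarrow> 'a set) \<Rightarrow> 'a set" where
  "singular_set X N A = X - (\<Union>i\<in>{1..N}. A i)"

definition regular_order :: "'a set \<Rightarrow> ('a \<Rightarrow> 'a) \<Rightarrow> 'a set \<Rightarrow> nat \<Rightarrow> 'a \<Rightarrow> bool" where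
  "regular_order X f S n x \<longleftrightarrow> x \<in> X \<and> (\<forall>j<n. (f ^^ j) x \<notin> S)"

definition regular_points :: "'a set \<Rightarrow> ('a \<Rightarrow> 'a) \<Rightarrow> 'a set \<Rightarrow> 'a set" where
  "regular_points X f S = {x \<in> X. \<forall>n. regular_order X f S n x}"

definition itineraries :: "'a set \<Rightarrow> nat \<Rightarrow> ('a \<Rightarrow> 'a) \<Rightarrow> (nat \<Rightarrow> 'a set) \<Rightarrow> nat \<Rightarrow> nat list set" where
  "itineraries X N f A n =
     {\<alpha>. length \<alpha> = n \<and> (\<exists>x. regular_order X f (singular_set X N A) n x \<and>
          (\<forall>j<n. \<alpha> ! j \<in> {1..N} \<and> (f ^^ j) x \<in> A (\<alpha> ! j)))}"

text \<open>phi^alpha = phi_{i_{n-1}} o ... o phi_{i_0}.\<close>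
definition ifs_comp :: "(nat \<Rightarrow> 'a \<Rightarrow> 'a) \<Rightarrow> nat list \<Rightarrow> 'a \<Rightarrow> 'a" where
  "ifs_comp phi \<alpha> x = fold (\<lambda>i y. phi i y) \<alpha> x"

definition omega_limit :: "('a::topological_space \<Rightarrow> 'a) \<Rightarrow> 'a \<Rightarrow> 'a set" where
  "omega_limit f x = (\<Inter>m\<in>{1..}. closure {(f ^^ n) x | n. n \<ge> m})"

definition periodic_orbit :: "'a set \<Rightarrow> ('a \<Rightarrow> 'a) \<Rightarrow> 'a set \<Rightarrow> bool" where
  "periodic_orbit X f P \<longleftrightarrow> (\<exists>p\<in>X. \<exists>q\<ge>1. (f ^^ q) p = p \<and> P = {(f ^^ k) p | k. True})"

definition asymptotically_periodic :: "'a::topological_space set \<Rightarrow> ('a \<Rightarrow> 'a) \<Rightarrow> 'a set \<Rightarrow> bool" where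
  "asymptotically_periodic X f Y \<longleftrightarrow>
     (\<exists>F. finite F \<and> (\<forall>P\<in>F. periodic_orbit X f P) \<and> (\<Union>x\<in>Y. omega_limit f x) = \<Union>F)"

definition J_set :: "'a set \<Rightarrow> nat \<Rightarrow> 'm::metric_space set \<Rightarrow> ('m \<Rightarrow> 'a \<Rightarrow> 'a) \<Rightarrow> ('m \<Rightarrow> nat \<Rightarrow> 'a set)
      \<Rightarrow> 'm \<Rightarrow> real \<Rightarrow> nat \<Rightarrow> nat list set" where
  "J_set X N U f A \<mu>s \<delta> n = (\<Union>\<mu>\<in>U \<inter> ball \<mu>s \<delta>. itineraries X N (f \<mu>) (A \<mu>) n)"

text \<open>(1/n) log #J, with log 0 = -infinity (extended reals).\<close>
definition log_growth :: "nat \<Rightarrow> nat \<Rightarrow> ereal" where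
  "log_growth k n = (if k = 0 then -\<infinity> else ereal (ln (real k) / real n))"

definition hypothesis_E :: "'a set \<Rightarrow> nat \<Rightarrow> 'm::metric_space set \<Rightarrow> ('m \<Rightarrow> 'a \<Rightarrow> 'a) \<Rightarrow> ('m \<Rightarrow> nat \<Rightarrow> 'a set)
      \<Rightarrow> 'm \<Rightarrow> bool" where
  "hypothesis_E X N U f A \<mu>s \<longleftrightarrow>
     ((\<lambda>\<delta>. limsup (\<lambda>n. log_growth (card (J_set X N U f A \<mu>s \<delta> n)) n)) \<longlongrightarrow> 0) (at_right 0)"

text \<open>d(x,S) = inf over S, with inf of the empty set = +infinity: d(x,S) \<le> eps iff
  S is nonempty and infdist x S \<le> eps.\<close>
definition hypothesis_T :: "'a::metric_space set \<Rightarrow> nat \<Rightarrow> 'm::euclidean_space set \<Rightarrow> ('m \<Rightarrow> 'a \<Rightarrow> 'a)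
      \<Rightarrow> ('m \<Rightarrow> nat \<Rightarrow> 'a set) \<Rightarrow> ('m \<Rightarrow> nat \<Rightarrow> 'a \<Rightarrow> 'a) \<Rightarrow> 'm \<Rightarrow> bool" where
  "hypothesis_T X N U f A phi \<mu>s \<longleftrightarrow>
     (\<exists>x0\<in>X. \<exists>\<epsilon>0>0. \<exists>\<delta>0>0. \<exists>n0\<ge>1. \<exists>a>0. \<exists>c>0.
        \<forall>\<epsilon>. 0 < \<epsilon> \<and> \<epsilon> < \<epsilon>0 \<longrightarrow> (\<forall>n\<ge>n0. \<forall>\<alpha>\<in>J_set X N U f A \<mu>s \<delta>0 n.
          outer_measure_of lebesgue
            {\<mu> \<in> U \<inter> ball \<mu>s \<delta>0. singular_set X N (A \<mu>) \<noteq> {} \<and>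
                 infdist (ifs_comp (phi \<mu>) \<alpha> x0) (singular_set X N (A \<mu>)) \<le> \<epsilon>}
          \<le> ennreal (c * \<epsilon> powr a)))"

end

theory Submission
  imports Defs
begin

(*
  For a fixed parameter, take an itinerary length n and the radius r = kappa lam^n.  If every
  centre phi^alpha(x0), alpha an itinerary of order n, is r-far from the singular set, then the
  balls of radius r around these centres are connected and avoid the singular set, so each lies in
  one piece A_i, where f is the contraction phi_i; and f maps it into a slightly smaller ball around
  the centre of the shifted itinerary.  These finitely many balls form a system of contracting
  trapping regions: following the induced map on itineraries into a cycle and applying Banach's
  fixed point theorem to the return map, every regular orbit, which enters some ball after n
  steps, is asymptotic to one of finitely many periodic orbits.

  Hence, if f_mu is not asymptotically periodic, then for every n some alpha in J_n has its centre
  r-close to the singular set.  By (T) each such event has measure O(lam^(a n)), and by (E) there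
  are at most rho^n itineraries for any rho > 1 once the parameter ball is small; with
  rho lam^a < 1 the bad parameters are covered by sets of measure tending to 0.
*)

lemma omega_limit_iff:
  fixes f :: "'a::metric_space \<Rightarrow> 'a"
  shows "y \<in> omega_limit f x \<longleftrightarrow> (\<forall>e>0. \<exists>\<^sub>F n in sequentially. dist ((f ^^ n) x) y < e)"
proof -
  have "y \<in> closure {(f ^^ n) x | n. n \<ge> m} \<longleftrightarrow> (\<forall>e>0. \<exists>n\<ge>m. dist ((f ^^ n) x) y < e)" for m
    unfolding closure_approachable by blast
  then have "y \<in> omega_limit f x \<longleftrightarrow> (\<forall>m\<ge>1. \<forall>e>0. \<exists>n\<ge>m. dist ((f ^^ n) x) y < e)"
    unfolding omega_limit_def by (simp add: atLeast_def)
  also have "\<dots> \<longleftrightarrow> (\<forall>e>0. \<forall>m. \<exists>n\<ge>m. dist ((f ^^ n) x) y < e)"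
  proof (intro iffI allI impI)
    fix e :: real and m :: nat
    assume "\<forall>m\<ge>1. \<forall>e>0. \<exists>n\<ge>m. dist ((f ^^ n) x) y < e" and "e > 0"
    moreover have "Suc m \<ge> 1"
      by simp
    ultimately obtain n where "n \<ge> Suc m" "dist ((f ^^ n) x) y < e"
      by blast
    then show "\<exists>n\<ge>m. dist ((f ^^ n) x) y < e"
      using Suc_leD by blast
  qed simp
  finally show ?thesis
    unfolding frequently_sequentially .
qed

lemma omega_limit_funpow:
  fixes f :: "'a::metric_space \<Rightarrow> 'a"
  shows "omega_limit f ((f ^^ k) x) = omega_limit f x"
proof -
  have shift: "(\<exists>\<^sub>F n in sequentially. P (n + k)) \<longleftrightarrow> (\<exists>\<^sub>F n in sequentially. P n)" for P
    unfolding frequently_def using eventually_sequentially_seg[of "\<lambda>n. \<not> P n" k] by simp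
  show ?thesis
    unfolding set_eq_iff omega_limit_iff
    using shift[of "\<lambda>n. dist ((f ^^ n) x) _ < _"] by (simp add: funpow_add)
qed

lemma omega_limit_subset_if_asymptotic:
  fixes f :: "'a::metric_space \<Rightarrow> 'a"
  assumes "(\<lambda>n. dist ((f ^^ n) x) ((f ^^ n) x')) \<longlonglongrightarrow> 0"
  shows "omega_limit f x \<subseteq> omega_limit f x'"
proof
  fix y assume y: "y \<in> omega_limit f x"
  show "y \<in> omega_limit f x'"
    unfolding omega_limit_iff
  proof (intro allI impI)
    fix e :: real assume "e > 0"
    then have "\<exists>\<^sub>F n in sequentially. dist ((f ^^ n) x) y < e / 2"
      using y omega_limit_iff half_gt_zero by blast
    moreover have "\<forall>\<^sub>F n in sequentially. dist ((f ^^ n) x) ((f ^^ n) x') < e / 2"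
      using assms \<open>e > 0\<close> by (intro order_tendstoD(2)) auto
    ultimately show "\<exists>\<^sub>F n in sequentially. dist ((f ^^ n) x') y < e"
      by (rule frequently_eventually_frequently[THEN frequently_elim1])
        (metis dist_commute dist_triangle_half_l)
  qed
qed

lemma omega_limit_eq_if_asymptotic:
  fixes f :: "'a::metric_space \<Rightarrow> 'a"
  assumes "(\<lambda>n. dist ((f ^^ n) x) ((f ^^ n) x')) \<longlonglongrightarrow> 0"
  shows "omega_limit f x = omega_limit f x'"
  using assms omega_limit_subset_if_asymptotic[of f x x'] omega_limit_subset_if_asymptotic[of f x' x]
  by (simp add: dist_commute)

lemma funpow_mod_period:
  assumes "(f ^^ p) q = q"
  shows "(f ^^ k) q = (f ^^ (k mod p)) q"
proof -
  have periodic: "(f ^^ (p * m)) q = q" for m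
    by (induction m) (simp_all add: funpow_add assms)
  have "k = k mod p + p * (k div p)"
    by simp
  then have "(f ^^ k) q = (f ^^ (k mod p)) ((f ^^ (p * (k div p))) q)"
    by (metis comp_apply funpow_add)
  then show ?thesis
    by (simp add: periodic)
qed

lemma omega_limit_periodic_point:
  fixes f :: "'a::metric_space \<Rightarrow> 'a"
  assumes "(f ^^ p) q = q" and "p \<ge> 1"
  shows "omega_limit f q = {(f ^^ k) q | k. True}"
proof (rule equalityI)
  let ?orbit = "{(f ^^ k) q | k. True}"
  have "?orbit \<subseteq> (\<lambda>k. (f ^^ k) q) ` {..<p}"
  proof clarify
    fix k
    show "(f ^^ k) q \<in> (\<lambda>k. (f ^^ k) q) ` {..<p}"
      using funpow_mod_period[OF assms(1), of k] assms(2) by (intro image_eqI[of _ _ "k mod p"]) auto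
  qed
  then have "closed ?orbit"
    using finite_subset finite_imp_closed by blast
  show "omega_limit f q \<subseteq> ?orbit"
  proof
    fix y assume "y \<in> omega_limit f q"
    then have "\<forall>e>0. \<exists>k. dist ((f ^^ k) q) y < e"
      unfolding omega_limit_iff using frequently_ex by blast
    then have "y \<in> closure ?orbit"
      unfolding closure_approachable by blast
    with \<open>closed ?orbit\<close> show "y \<in> ?orbit"
      by simp
  qed
  show "?orbit \<subseteq> omega_limit f q"
  proof (clarsimp simp: omega_limit_iff frequently_sequentially)
    fix k m and e :: real
    assume "0 < e"
    have "(f ^^ (k + p * m)) q = (f ^^ k) q"
      using funpow_mod_period[OF assms(1), of "k + p * m"] funpow_mod_period[OF assms(1), of k]
      by simp
    moreover have "m \<le> k + p * m"
      using assms(2) by (simp add: trans_le_add2)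
    ultimately show "\<exists>n\<ge>m. dist ((f ^^ n) q) ((f ^^ k) q) < e"
      using \<open>0 < e\<close> by (metis dist_self)
  qed
qed

lemma funpow_eventually_periodic:
  assumes "finite I" "g ` I \<subseteq> I" "\<beta> \<in> I"
  obtains m p where "p \<ge> 1" "(g ^^ (p + m)) \<beta> = (g ^^ m) \<beta>"
proof -
  have "(g ^^ k) \<beta> \<in> I" for k
    using assms by (induction k) auto
  then have "finite (range (\<lambda>k. (g ^^ k) \<beta>))"
    using assms(1) by (meson finite_subset image_subsetI)
  then have "\<not> inj (\<lambda>k. (g ^^ k) \<beta>)"
    using finite_imageD infinite_UNIV_nat by blast
  then obtain k l where "k < l" "(g ^^ k) \<beta> = (g ^^ l) \<beta>"
    unfolding inj_def by (metis linorder_neqE_nat)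
  then show ?thesis
    using that[of "l - k" k] by simp
qed

lemma connected_subset_openin_disjoint_family:
  assumes "connected C" "C \<subseteq> X" "C \<subseteq> (\<Union>i\<in>J. A i)"
    and "\<And>i. i \<in> J \<Longrightarrow> openin (top_of_set X) (A i)" "disjoint_family_on A J"
    and "i \<in> J" "z \<in> C" "z \<in> A i"
  shows "C \<subseteq> A i"
proof -
  have open_trace: "openin (top_of_set C) (C \<inter> B)" if "openin (top_of_set X) B" for B
    using that \<open>C \<subseteq> X\<close> by (metis inf.absorb_iff2 openin_subtopology_Int2 subtopology_subtopology)
  have "C \<inter> A i = C - C \<inter> (\<Union>j\<in>J - {i}. A j)"
    using assms(3,5,6) by (auto simp: disjoint_family_on_def)
  moreover have "openin (top_of_set C) (C \<inter> (\<Union>j\<in>J - {i}. A j))"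
    using assms(4) by (intro open_trace openin_Union) auto
  ultimately have "closedin (top_of_set C) (C \<inter> A i)"
    by (metis closedin_diff closedin_topspace topspace_euclidean_subtopology)
  moreover have "openin (top_of_set C) (C \<inter> A i)"
    using assms(4,6) open_trace by blast
  ultimately have "C \<inter> A i = C"
    using assms(1,7,8) unfolding connected_clopen by blast
  then show ?thesis by blast
qed

(* The complete cores K carry the fixed point argument; the regions D need not be closed. *)
locale trapping_regions =
  fixes f :: "'a::metric_space \<Rightarrow> 'a" and lam :: real
    and I :: "'b set" and succ :: "'b \<Rightarrow> 'b" and D K :: "'b \<Rightarrow> 'a set"
  assumes finite_I: "finite I"
    and succ_in: "\<beta> \<in> I \<Longrightarrow> succ \<beta> \<in> I"
    and K_subset_D: "\<beta> \<in> I \<Longrightarrow> K \<beta> \<subseteq> D \<beta>"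
    and complete_K: "\<beta> \<in> I \<Longrightarrow> complete (K \<beta>)"
    and maps_D_into_K: "\<beta> \<in> I \<Longrightarrow> f ` D \<beta> \<subseteq> K (succ \<beta>)"
    and contracts_D: "\<beta> \<in> I \<Longrightarrow> z \<in> D \<beta> \<Longrightarrow> z' \<in> D \<beta> \<Longrightarrow> dist (f z) (f z') \<le> lam * dist z z'"
    and lam_nonneg: "0 \<le> lam" and lam_less_1: "lam < 1"
begin

lemma funpow_maps_D:
  assumes "\<beta> \<in> I" "z \<in> D \<beta>"
  shows "(succ ^^ t) \<beta> \<in> I \<and> (f ^^ t) z \<in> D ((succ ^^ t) \<beta>)"
proof (induction t)
  case (Suc t)
  then have "succ ((succ ^^ t) \<beta>) \<in> I" "f ((f ^^ t) z) \<in> K (succ ((succ ^^ t) \<beta>))"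
    using succ_in maps_D_into_K by (auto simp: image_subset_iff)
  then show ?case
    using K_subset_D by auto
qed (use assms in simp)

lemma funpow_maps_D_into_K:
  assumes "\<beta> \<in> I" "z \<in> D \<beta>" "t \<ge> 1"
  shows "(f ^^ t) z \<in> K ((succ ^^ t) \<beta>)"
proof -
  obtain s where "t = Suc s"
    using assms(3) by (cases t) auto
  then show ?thesis
    using funpow_maps_D[OF assms(1,2), of s] maps_D_into_K by auto
qed

lemma funpow_contracts_D:
  assumes "\<beta> \<in> I" "z \<in> D \<beta>" "z' \<in> D \<beta>"
  shows "dist ((f ^^ t) z) ((f ^^ t) z') \<le> lam ^ t * dist z z'"
proof (induction t)
  case (Suc t)
  have "dist ((f ^^ Suc t) z) ((f ^^ Suc t) z') \<le> lam * dist ((f ^^ t) z) ((f ^^ t) z')"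
    using funpow_maps_D[OF assms(1,2), of t] funpow_maps_D[OF assms(1,3), of t]
      contracts_D[of "(succ ^^ t) \<beta>" "(f ^^ t) z" "(f ^^ t) z'"] by simp
  also have "\<dots> \<le> lam * (lam ^ t * dist z z')"
    using Suc lam_nonneg by (rule mult_left_mono)
  finally show ?case
    by (simp add: mult.assoc)
qed simp

lemma omega_limit_constant_on_D:
  assumes "\<beta> \<in> I" "z \<in> D \<beta>" "z' \<in> D \<beta>"
  shows "omega_limit f z = omega_limit f z'"
proof (rule omega_limit_eq_if_asymptotic)
  have "(\<lambda>t. lam ^ t) \<longlonglongrightarrow> 0"
    using lam_nonneg lam_less_1 by (intro LIMSEQ_power_zero) simp
  then have "(\<lambda>t. lam ^ t * dist z z') \<longlonglongrightarrow> 0"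
    by (rule tendsto_mult_left_zero)
  moreover have "\<forall>\<^sub>F t in sequentially. norm (dist ((f ^^ t) z) ((f ^^ t) z')) \<le> lam ^ t * dist z z'"
    using funpow_contracts_D[OF assms] by (intro always_eventually allI) simp
  ultimately show "(\<lambda>t. dist ((f ^^ t) z) ((f ^^ t) z')) \<longlonglongrightarrow> 0"
    by (rule Lim_null_comparison[rotated])
qed

lemma periodic_point_in_K:
  assumes "\<gamma> \<in> I" "z \<in> D \<gamma>" "p \<ge> 1" "(succ ^^ p) \<gamma> = \<gamma>"
  obtains q where "q \<in> K \<gamma>" "(f ^^ p) q = q"
proof -
  have into_K: "(f ^^ p) u \<in> K \<gamma>" if "u \<in> D \<gamma>" for u
    using funpow_maps_D_into_K[OF assms(1) that assms(3)] assms(4) by simp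
  have "\<exists>!q\<in>K \<gamma>. (f ^^ p) q = q"
  proof (rule Banach_fix)
    show "complete (K \<gamma>)"
      using complete_K[OF assms(1)] .
    show "K \<gamma> \<noteq> {}"
      using into_K[OF assms(2)] by blast
    show "(f ^^ p) ` K \<gamma> \<subseteq> K \<gamma>"
      using into_K K_subset_D[OF assms(1)] by (auto simp: subset_iff)
    show "0 \<le> lam ^ p" "lam ^ p < 1"
      using lam_nonneg lam_less_1 assms(3) by (auto simp: power_less_one_iff)
    show "dist ((f ^^ p) u) ((f ^^ p) v) \<le> lam ^ p * dist u v" if "u \<in> K \<gamma>" "v \<in> K \<gamma>" for u v
      using funpow_contracts_D[OF assms(1), of u v p] that K_subset_D[OF assms(1)] by (meson subsetD)
  qed
  then show ?thesis
    using that by auto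
qed

lemma omega_limit_periodic_orbit:
  assumes "\<beta> \<in> I" "z \<in> D \<beta>" "\<Union>(D ` I) \<subseteq> X"
  shows "periodic_orbit X f (omega_limit f z)"
proof -
  obtain m p where p: "p \<ge> 1" "(succ ^^ (p + m)) \<beta> = (succ ^^ m) \<beta>"
    using funpow_eventually_periodic[OF finite_I _ assms(1)] succ_in by blast
  define \<gamma> where "\<gamma> = (succ ^^ m) \<beta>"
  have \<gamma>: "\<gamma> \<in> I" "(f ^^ m) z \<in> D \<gamma>" "(succ ^^ p) \<gamma> = \<gamma>"
    using funpow_maps_D[OF assms(1,2)] p(2) unfolding \<gamma>_def by (auto simp: funpow_add)
  obtain q where q: "q \<in> K \<gamma>" "(f ^^ p) q = q"
    using periodic_point_in_K[OF \<gamma>(1,2) p(1) \<gamma>(3)] .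
  have "q \<in> D \<gamma>"
    using q(1) K_subset_D[OF \<gamma>(1)] by (rule subsetD[rotated])
  then have "q \<in> X"
    using assms(3) \<gamma>(1) by blast
  have "omega_limit f z = omega_limit f q"
    using omega_limit_funpow[of f m z] omega_limit_constant_on_D[OF \<gamma>(1,2) \<open>q \<in> D \<gamma>\<close>] by simp
  also have "\<dots> = {(f ^^ k) q | k. True}"
    using omega_limit_periodic_point[OF q(2) p(1)] .
  finally show ?thesis
    unfolding periodic_orbit_def using \<open>q \<in> X\<close> q(2) p(1) by blast
qed

lemma asymptotically_periodic_if_trapped:
  assumes "\<Union>(D ` I) \<subseteq> X" and "\<forall>y\<in>Y. \<exists>k. \<exists>\<beta>\<in>I. (f ^^ k) y \<in> D \<beta>"
  shows "asymptotically_periodic X f Y"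
  unfolding asymptotically_periodic_def
proof (intro exI conjI)
  have "finite (omega_limit f ` D \<beta>)" if "\<beta> \<in> I" for \<beta>
  proof (cases "D \<beta> = {}")
    case False
    then obtain z where "z \<in> D \<beta>"
      by blast
    then have "omega_limit f ` D \<beta> \<subseteq> {omega_limit f z}"
      using omega_limit_constant_on_D[OF that] by blast
    then show ?thesis
      by (rule finite_subset) simp
  qed simp
  moreover have "omega_limit f ` Y \<subseteq> (\<Union>\<beta>\<in>I. omega_limit f ` D \<beta>)"
  proof clarify
    fix y assume "y \<in> Y"
    then obtain k \<beta> where "\<beta> \<in> I" "(f ^^ k) y \<in> D \<beta>"
      using assms(2) by blast
    then show "omega_limit f y \<in> (\<Union>\<beta>\<in>I. omega_limit f ` D \<beta>)"
      using omega_limit_funpow[of f k y] by (metis UN_I image_eqI)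
  qed
  ultimately show "finite (omega_limit f ` Y)"
    using finite_I by (meson finite_UN_I finite_subset)
  show "\<forall>P\<in>omega_limit f ` Y. periodic_orbit X f P"
  proof clarify
    fix y assume "y \<in> Y"
    then obtain k \<beta> where "\<beta> \<in> I" "(f ^^ k) y \<in> D \<beta>"
      using assms(2) by blast
    then have "periodic_orbit X f (omega_limit f ((f ^^ k) y))"
      using assms(1) by (rule omega_limit_periodic_orbit)
    then show "periodic_orbit X f (omega_limit f y)"
      by (simp add: omega_limit_funpow)
  qed
qed simp

end

lemma ifs_comp_Nil [simp]: "ifs_comp phi [] x = x"
  by (simp add: ifs_comp_def)

lemma ifs_comp_Cons [simp]: "ifs_comp phi (i # \<alpha>) x = ifs_comp phi \<alpha> (phi i x)"
  by (simp add: ifs_comp_def)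

lemma ifs_comp_append [simp]: "ifs_comp phi (\<alpha> @ \<beta>) x = ifs_comp phi \<beta> (ifs_comp phi \<alpha> x)"
  by (simp add: ifs_comp_def)

lemma itineraries_subset_lists: "itineraries X N f A n \<subseteq> {\<alpha>. set \<alpha> \<subseteq> {1..N} \<and> length \<alpha> = n}"
  unfolding itineraries_def by (auto simp: set_conv_nth)

lemma finite_itineraries: "finite (itineraries X N f A n)"
  by (rule finite_subset[OF itineraries_subset_lists]) (simp add: finite_lists_length_eq)

lemma finite_J_set: "finite (J_set X N U f A \<mu>s \<delta> n)"
proof (rule finite_subset)
  show "J_set X N U f A \<mu>s \<delta> n \<subseteq> {\<alpha>. set \<alpha> \<subseteq> {1..N} \<and> length \<alpha> = n}"
    unfolding J_set_def using itineraries_subset_lists by blast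
qed (simp add: finite_lists_length_eq)

lemma J_set_mono: "\<delta> \<le> \<delta>' \<Longrightarrow> J_set X N U f A \<mu>s \<delta> n \<subseteq> J_set X N U f A \<mu>s \<delta>' n"
  unfolding J_set_def by auto

locale piecewise_contraction =
  fixes X :: "'a::metric_space set" and lam :: real and N :: nat
    and f :: "'a \<Rightarrow> 'a" and A :: "nat \<Rightarrow> 'a set" and phi :: "nat \<Rightarrow> 'a \<Rightarrow> 'a"
  assumes pw_contraction: "pw_contraction X lam N f A phi" and lam_pos: "0 < lam"
begin

lemma openin_A: "i \<in> {1..N} \<Longrightarrow> openin (top_of_set X) (A i)"
  using pw_contraction unfolding pw_contraction_def by blast

lemma disjoint_family_A: "disjoint_family_on A {1..N}"
  using pw_contraction unfolding pw_contraction_def disjoint_family_on_def by blast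

lemma phi_in: "i \<in> {1..N} \<Longrightarrow> x \<in> X \<Longrightarrow> phi i x \<in> X"
  using pw_contraction unfolding pw_contraction_def bi_lipschitz_le_def by blast

lemma phi_lipschitz: "i \<in> {1..N} \<Longrightarrow> x \<in> X \<Longrightarrow> y \<in> X \<Longrightarrow> dist (phi i x) (phi i y) \<le> lam * dist x y"
  using pw_contraction unfolding pw_contraction_def bi_lipschitz_le_def by blast

lemma f_in: "x \<in> X \<Longrightarrow> f x \<in> X"
  using pw_contraction unfolding pw_contraction_def by blast

lemma funpow_in: "x \<in> X \<Longrightarrow> (f ^^ k) x \<in> X"
  by (induction k) (simp_all add: f_in)

lemma f_eq_phi: "i \<in> {1..N} \<Longrightarrow> x \<in> A i \<Longrightarrow> f x = phi i x"
  using pw_contraction unfolding pw_contraction_def by blast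

lemma ifs_comp_in: "set \<alpha> \<subseteq> {1..N} \<Longrightarrow> x \<in> X \<Longrightarrow> ifs_comp phi \<alpha> x \<in> X"
  by (induction \<alpha> arbitrary: x) (simp_all add: phi_in)

lemma ifs_comp_lipschitz:
  "set \<alpha> \<subseteq> {1..N} \<Longrightarrow> x \<in> X \<Longrightarrow> y \<in> X \<Longrightarrow>
    dist (ifs_comp phi \<alpha> x) (ifs_comp phi \<alpha> y) \<le> lam ^ length \<alpha> * dist x y"
proof (induction \<alpha> arbitrary: x y)
  case (Cons i \<alpha>)
  then have "dist (ifs_comp phi (i # \<alpha>) x) (ifs_comp phi (i # \<alpha>) y)
      \<le> lam ^ length \<alpha> * dist (phi i x) (phi i y)"
    by (simp add: phi_in)
  also have "\<dots> \<le> lam ^ length \<alpha> * (lam * dist x y)"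
    using Cons.prems phi_lipschitz lam_pos by (intro mult_left_mono) auto
  finally show ?case
    by (simp add: mult_ac)
qed simp

definition itinerary_of :: "'a \<Rightarrow> nat list \<Rightarrow> bool" where
  "itinerary_of x \<alpha> \<longleftrightarrow> (\<forall>j<length \<alpha>. \<alpha> ! j \<in> {1..N} \<and> (f ^^ j) x \<in> A (\<alpha> ! j))"

lemma itinerary_of_Cons:
  "itinerary_of x (i # \<alpha>) \<longleftrightarrow> i \<in> {1..N} \<and> x \<in> A i \<and> itinerary_of (f x) \<alpha>"
  unfolding itinerary_of_def by (auto simp: less_Suc_eq_0_disj funpow_swap1)

lemma itinerary_of_snoc:
  "itinerary_of x (\<alpha> @ [i]) \<longleftrightarrow> itinerary_of x \<alpha> \<and> i \<in> {1..N} \<and> (f ^^ length \<alpha>) x \<in> A i"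
  unfolding itinerary_of_def by (auto simp: nth_append less_Suc_eq)

lemma itinerary_of_subset: "itinerary_of x \<alpha> \<Longrightarrow> set \<alpha> \<subseteq> {1..N}"
  unfolding itinerary_of_def by (auto simp: set_conv_nth)

lemma mem_itineraries_iff:
  "\<alpha> \<in> itineraries X N f A n \<longleftrightarrow> length \<alpha> = n \<and> (\<exists>x\<in>X. itinerary_of x \<alpha>)"
proof
  assume "\<alpha> \<in> itineraries X N f A n"
  then show "length \<alpha> = n \<and> (\<exists>x\<in>X. itinerary_of x \<alpha>)"
    unfolding itineraries_def itinerary_of_def regular_order_def by auto
next
  assume "length \<alpha> = n \<and> (\<exists>x\<in>X. itinerary_of x \<alpha>)"
  then obtain x where x: "x \<in> X" "length \<alpha> = n" "itinerary_of x \<alpha>"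
    by blast
  then have "(f ^^ j) x \<notin> singular_set X N A" if "j < n" for j
    using that unfolding itinerary_of_def singular_set_def by blast
  with x show "\<alpha> \<in> itineraries X N f A n"
    unfolding itineraries_def regular_order_def itinerary_of_def by auto
qed

lemma itinerary_exists:
  assumes "x \<in> regular_points X f (singular_set X N A)"
  obtains \<alpha> where "length \<alpha> = n" "itinerary_of x \<alpha>"
proof -
  have "\<forall>j. \<exists>i. i \<in> {1..N} \<and> (f ^^ j) x \<in> A i"
    using assms funpow_in unfolding regular_points_def regular_order_def singular_set_def by blast
  then obtain h where "\<forall>j. h j \<in> {1..N} \<and> (f ^^ j) x \<in> A (h j)"
    by metis
  then show ?thesis
    using that[of "map h [0..<n]"] unfolding itinerary_of_def by simp
qed

lemma funpow_eq_ifs_comp: "itinerary_of x \<alpha> \<Longrightarrow> (f ^^ length \<alpha>) x = ifs_comp phi \<alpha> x"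
proof (induction \<alpha> rule: rev_induct)
  case (snoc i \<alpha>)
  then show ?case
    by (simp add: itinerary_of_snoc f_eq_phi)
qed simp

lemma dist_funpow_ifs_comp:
  assumes "itinerary_of x \<alpha>" "x \<in> X" "y \<in> X"
  shows "dist ((f ^^ length \<alpha>) x) (ifs_comp phi \<alpha> y) \<le> lam ^ length \<alpha> * dist x y"
  using ifs_comp_lipschitz[OF itinerary_of_subset[OF assms(1)] assms(2,3)]
  by (simp add: funpow_eq_ifs_comp[OF assms(1)])

lemma connected_nonsingular_subset_A:
  assumes "connected C" "C \<subseteq> X" "C \<inter> singular_set X N A = {}"
    and "i \<in> {1..N}" "z \<in> C" "z \<in> A i"
  shows "C \<subseteq> A i"
proof (rule connected_subset_openin_disjoint_family[OF assms(1,2) _ openin_A disjoint_family_A assms(4-6)])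
  show "C \<subseteq> (\<Union>i\<in>{1..N}. A i)"
    using assms(2,3) unfolding singular_set_def by blast
qed

end

locale separated_itineraries = piecewise_contraction +
  fixes x0 :: 'a and n :: nat and r :: real
  assumes compact_X: "compact X"
    and connected_balls: "\<forall>x\<in>X. \<forall>r>0. connected (ball x r \<inter> X)"
    and lam_less_1: "lam < 1" and x0_in: "x0 \<in> X" and n_pos: "n \<ge> 1"
    and radius: "lam ^ n * diameter X < (1 - lam) * r"
    and balls_avoid_singular:
      "\<forall>\<alpha>\<in>itineraries X N f A n. ball (ifs_comp phi \<alpha> x0) r \<inter> singular_set X N A = {}"
begin

definition trap :: "nat list \<Rightarrow> 'a set" where
  "trap \<alpha> = ball (ifs_comp phi \<alpha> x0) r \<inter> X"

(* f maps trap alpha into the ball of radius lam r around phi_i of its centre, and that point is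
   within lam^n diameter X of the centre of the shifted itinerary. *)
definition trap_core :: "nat list \<Rightarrow> 'a set" where
  "trap_core \<alpha> = cball (ifs_comp phi \<alpha> x0) (lam * r + lam ^ n * diameter X) \<inter> X"

lemma dist_le_diameter: "x \<in> X \<Longrightarrow> y \<in> X \<Longrightarrow> dist x y \<le> diameter X"
  using diameter_bounded_bound compact_imp_bounded[OF compact_X] by blast

lemma radius_pos: "0 < r"
proof -
  have "0 \<le> lam ^ n * diameter X"
    using lam_pos dist_le_diameter[OF x0_in x0_in] by simp
  with radius have "0 < (1 - lam) * r"
    by linarith
  then show ?thesis
    using lam_less_1 by (simp add: zero_less_mult_iff)
qed

lemma dist_funpow_center_le:
  assumes "x \<in> X" "itinerary_of x \<alpha>" "length \<alpha> = n"
  shows "dist ((f ^^ n) x) (ifs_comp phi \<alpha> x0) \<le> lam ^ n * diameter X"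
proof -
  have "dist ((f ^^ n) x) (ifs_comp phi \<alpha> x0) \<le> lam ^ n * dist x x0"
    using dist_funpow_ifs_comp[OF assms(2,1) x0_in] assms(3) by simp
  also have "\<dots> \<le> lam ^ n * diameter X"
    using dist_le_diameter[OF assms(1) x0_in] lam_pos by (intro mult_left_mono) auto
  finally show ?thesis .
qed

lemma funpow_in_trap:
  assumes "x \<in> X" "itinerary_of x \<alpha>" "length \<alpha> = n"
  shows "(f ^^ n) x \<in> trap \<alpha>"
proof -
  have "(1 - lam) * r \<le> r"
    using lam_pos radius_pos by (simp add: algebra_simps)
  then show ?thesis
    using dist_funpow_center_le[OF assms] radius funpow_in[OF assms(1)]
    unfolding trap_def by (simp add: dist_commute)
qed

lemma trap_subset_A:
  assumes "\<alpha> \<in> itineraries X N f A n"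
  obtains i where "i \<in> {1..N}" "trap \<alpha> \<subseteq> A i" "tl \<alpha> @ [i] \<in> itineraries X N f A n"
proof -
  obtain x where x: "x \<in> X" "itinerary_of x \<alpha>" "length \<alpha> = n"
    using assms mem_itineraries_iff by blast
  have "(f ^^ n) x \<in> trap \<alpha>"
    using funpow_in_trap[OF x] .
  moreover have trap_nonsingular: "trap \<alpha> \<inter> singular_set X N A = {}"
    using assms balls_avoid_singular unfolding trap_def by blast
  ultimately obtain i where i: "i \<in> {1..N}" "(f ^^ n) x \<in> A i"
    unfolding trap_def singular_set_def by blast
  have "connected (trap \<alpha>)"
    using connected_balls radius_pos ifs_comp_in[OF itinerary_of_subset[OF x(2)] x0_in]
    unfolding trap_def by blast
  then have "trap \<alpha> \<subseteq> A i"
    using connected_nonsingular_subset_A trap_nonsingular i \<open>(f ^^ n) x \<in> trap \<alpha>\<close>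
    unfolding trap_def by blast
  moreover obtain a where "\<alpha> = a # tl \<alpha>"
    using x(3) n_pos by (cases \<alpha>) auto
  then have "itinerary_of (f x) (tl \<alpha> @ [i])"
    using x i by (metis itinerary_of_Cons itinerary_of_snoc funpow_Suc_right comp_apply length_Cons)
  then have "tl \<alpha> @ [i] \<in> itineraries X N f A n"
    using x f_in n_pos mem_itineraries_iff by auto
  ultimately show ?thesis
    using that i(1) by blast
qed

lemma dist_shifted_center_le:
  assumes "a # \<beta> \<in> itineraries X N f A n" "\<beta> @ [i] \<in> itineraries X N f A n"
  shows "dist (phi i (ifs_comp phi (a # \<beta>) x0)) (ifs_comp phi (\<beta> @ [i]) x0) \<le> lam ^ n * diameter X"
proof -
  have "set (a # \<beta>) \<subseteq> {1..N}" and set': "set (\<beta> @ [i]) \<subseteq> {1..N}" and "length (\<beta> @ [i]) = n"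
    using assms mem_itineraries_iff itinerary_of_subset by blast+
  then have "phi a x0 \<in> X"
    using phi_in x0_in by simp
  have "phi i (ifs_comp phi (a # \<beta>) x0) = ifs_comp phi (\<beta> @ [i]) (phi a x0)"
    by simp
  then have "dist (phi i (ifs_comp phi (a # \<beta>) x0)) (ifs_comp phi (\<beta> @ [i]) x0)
      \<le> lam ^ n * dist (phi a x0) x0"
    using ifs_comp_lipschitz[OF set' \<open>phi a x0 \<in> X\<close> x0_in] \<open>length (\<beta> @ [i]) = n\<close> by (simp only:)
  also have "\<dots> \<le> lam ^ n * diameter X"
    using dist_le_diameter[OF \<open>phi a x0 \<in> X\<close> x0_in] lam_pos by (intro mult_left_mono) auto
  finally show ?thesis .
qed

lemma trap_step:
  assumes "\<alpha> \<in> itineraries X N f A n"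
  shows "\<exists>\<alpha>'\<in>itineraries X N f A n. f ` trap \<alpha> \<subseteq> trap_core \<alpha>' \<and>
    (\<forall>z\<in>trap \<alpha>. \<forall>z'\<in>trap \<alpha>. dist (f z) (f z') \<le> lam * dist z z')"
proof -
  obtain i where i: "i \<in> {1..N}" "trap \<alpha> \<subseteq> A i" and \<alpha>': "tl \<alpha> @ [i] \<in> itineraries X N f A n"
    using trap_subset_A[OF assms] .
  obtain a where a: "\<alpha> = a # tl \<alpha>"
    using assms n_pos mem_itineraries_iff by (cases \<alpha>) auto
  let ?c = "ifs_comp phi \<alpha> x0" and ?c' = "ifs_comp phi (tl \<alpha> @ [i]) x0"
  have center_step: "dist (phi i ?c) ?c' \<le> lam ^ n * diameter X"
    using dist_shifted_center_le[of a "tl \<alpha>" i] assms \<alpha>' a by metis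
  have f_eq: "f z = phi i z" if "z \<in> trap \<alpha>" for z
    using that i f_eq_phi by blast
  have "f z \<in> trap_core (tl \<alpha> @ [i])" if z: "z \<in> trap \<alpha>" for z
  proof -
    have "?c \<in> X"
      using ifs_comp_in assms mem_itineraries_iff itinerary_of_subset x0_in by blast
    then have "dist (phi i z) (phi i ?c) \<le> lam * dist z ?c"
      using phi_lipschitz i(1) z unfolding trap_def by blast
    also have "\<dots> \<le> lam * r"
      using z lam_pos unfolding trap_def by (simp add: dist_commute)
    finally have "dist ?c' (f z) \<le> lam * r + lam ^ n * diameter X"
      using center_step dist_triangle[of ?c' "f z" "phi i ?c"] f_eq[OF z] by (simp add: dist_commute)
    then show ?thesis
      using z f_in unfolding trap_def trap_core_def by simp
  qed
  moreover have "\<forall>z\<in>trap \<alpha>. \<forall>z'\<in>trap \<alpha>. dist (f z) (f z') \<le> lam * dist z z'"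
    using f_eq phi_lipschitz[OF i(1)] unfolding trap_def by simp
  ultimately show ?thesis
    using \<alpha>' by blast
qed

lemma ex_trapping_regions:
  obtains succ where "trapping_regions f lam (itineraries X N f A n) succ trap trap_core"
proof -
  have "\<forall>\<alpha>\<in>itineraries X N f A n. \<exists>\<alpha>'. \<alpha>' \<in> itineraries X N f A n \<and>
      f ` trap \<alpha> \<subseteq> trap_core \<alpha>' \<and> (\<forall>z\<in>trap \<alpha>. \<forall>z'\<in>trap \<alpha>. dist (f z) (f z') \<le> lam * dist z z')"
    using trap_step by blast
  from bchoice[OF this] obtain succ where succ: "\<forall>\<alpha>\<in>itineraries X N f A n.
      succ \<alpha> \<in> itineraries X N f A n \<and> f ` trap \<alpha> \<subseteq> trap_core (succ \<alpha>) \<and>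
      (\<forall>z\<in>trap \<alpha>. \<forall>z'\<in>trap \<alpha>. dist (f z) (f z') \<le> lam * dist z z')" ..
  have "trapping_regions f lam (itineraries X N f A n) succ trap trap_core"
  proof
    have "lam * r + lam ^ n * diameter X < r"
      using radius by (simp add: algebra_simps)
    then show "trap_core \<alpha> \<subseteq> trap \<alpha>" for \<alpha>
      unfolding trap_def trap_core_def by auto
    show "complete (trap_core \<alpha>)" for \<alpha>
      using compact_X unfolding trap_core_def
      by (simp add: Int_commute compact_Int_closed compact_imp_complete)
  qed (use finite_itineraries succ lam_pos lam_less_1 in auto)
  then show ?thesis
    using that by blast
qed

theorem asymptotically_periodic_regular_points:
  "asymptotically_periodic X f (regular_points X f (singular_set X N A))"
proof -
  obtain succ where "trapping_regions f lam (itineraries X N f A n) succ trap trap_core"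
    using ex_trapping_regions .
  then interpret trapping_regions f lam "itineraries X N f A n" succ trap trap_core .
  show ?thesis
  proof (rule asymptotically_periodic_if_trapped)
    show "\<Union>(trap ` itineraries X N f A n) \<subseteq> X"
      unfolding trap_def by blast
    show "\<forall>y\<in>regular_points X f (singular_set X N A). \<exists>k. \<exists>\<alpha>\<in>itineraries X N f A n. (f ^^ k) y \<in> trap \<alpha>"
    proof
      fix y assume y: "y \<in> regular_points X f (singular_set X N A)"
      then obtain \<alpha> where "length \<alpha> = n" "itinerary_of y \<alpha>"
        using itinerary_exists by blast
      moreover have "y \<in> X"
        using y unfolding regular_points_def by blast
      ultimately show "\<exists>k. \<exists>\<alpha>\<in>itineraries X N f A n. (f ^^ k) y \<in> trap \<alpha>"
        using funpow_in_trap mem_itineraries_iff by blast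
    qed
  qed
qed

end

lemma itinerary_near_singular_if_not_asymptotically_periodic:
  assumes "pw_contraction X lam N f A phi" "0 < lam" "lam < 1" "compact X"
    and "\<forall>x\<in>X. \<forall>r>0. connected (ball x r \<inter> X)" "x0 \<in> X" "n \<ge> 1"
    and "lam ^ n * diameter X < (1 - lam) * r"
    and "\<not> asymptotically_periodic X f (regular_points X f (singular_set X N A))"
  obtains \<alpha> where "\<alpha> \<in> itineraries X N f A n" "singular_set X N A \<noteq> {}"
    "infdist (ifs_comp phi \<alpha> x0) (singular_set X N A) \<le> r"
proof -
  have "\<not> (\<forall>\<alpha>\<in>itineraries X N f A n. ball (ifs_comp phi \<alpha> x0) r \<inter> singular_set X N A = {})"
  proof
    assume "\<forall>\<alpha>\<in>itineraries X N f A n. ball (ifs_comp phi \<alpha> x0) r \<inter> singular_set X N A = {}"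
    with assms(1-8) interpret separated_itineraries X lam N f A phi x0 n r
      by unfold_locales auto
    show False
      using assms(9) asymptotically_periodic_regular_points by simp
  qed
  then obtain \<alpha> s where "\<alpha> \<in> itineraries X N f A n" "s \<in> singular_set X N A"
    "dist (ifs_comp phi \<alpha> x0) s < r"
    by auto
  moreover from this have "infdist (ifs_comp phi \<alpha> x0) (singular_set X N A) \<le> r"
    using infdist_le[of s "singular_set X N A" "ifs_comp phi \<alpha> x0"] by simp
  ultimately show ?thesis
    using that by blast
qed

lemma outer_measure_of_UN_le:
  assumes "finite J" "\<And>j. j \<in> J \<Longrightarrow> E j \<subseteq> space M"
  shows "outer_measure_of M (\<Union>j\<in>J. E j) \<le> (\<Sum>j\<in>J. outer_measure_of M (E j))"
proof -
  have "\<forall>j\<in>J. \<exists>T. T \<in> sets M \<and> E j \<subseteq> T \<and> outer_measure_of M (E j) = emeasure M T"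
    using outer_measure_of_attain[OF assms(2)] by blast
  from bchoice[OF this] obtain T where
    T: "\<forall>j\<in>J. T j \<in> sets M \<and> E j \<subseteq> T j \<and> outer_measure_of M (E j) = emeasure M (T j)" ..
  have "outer_measure_of M (\<Union>j\<in>J. E j) \<le> outer_measure_of M (\<Union>j\<in>J. T j)"
    using T by (intro outer_measure_of_mono) blast
  also have "\<dots> = emeasure M (\<Union>j\<in>J. T j)"
    using T assms(1) by (intro outer_measure_of_eq sets.finite_UN) auto
  also have "\<dots> \<le> (\<Sum>j\<in>J. emeasure M (T j))"
    using T by (intro emeasure_subadditive_finite assms(1)) auto
  also have "\<dots> = (\<Sum>j\<in>J. outer_measure_of M (E j))"
    using T by simp
  finally show ?thesis .
qed

lemma (in complete_measure) null_sets_if_outer_measure_of_eq_0: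
  assumes "Z \<subseteq> space M" "outer_measure_of M Z = 0"
  shows "Z \<in> null_sets M"
proof -
  obtain T where "T \<in> sets M" "Z \<subseteq> T" "outer_measure_of M Z = emeasure M T"
    using outer_measure_of_attain[OF assms(1)] by blast
  then show ?thesis
    using assms(2) complete2[of Z T] by auto
qed

lemma (in complete_measure) null_sets_if_exponentially_small_cover:
  assumes cover: "\<forall>\<^sub>F n in sequentially. Z \<subseteq> (\<Union>\<alpha>\<in>J n. E n \<alpha>)"
    and finite: "\<And>n. finite (J n)" and sets: "\<And>n \<alpha>. E n \<alpha> \<subseteq> space M"
    and card: "\<forall>\<^sub>F n in sequentially. real (card (J n)) \<le> \<rho> ^ n"
    and small: "\<forall>\<^sub>F n in sequentially. \<forall>\<alpha>\<in>J n. outer_measure_of M (E n \<alpha>) \<le> ennreal (C * q ^ n)"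
    and "0 \<le> C" "0 \<le> q" "0 \<le> \<rho>" "\<rho> * q < 1"
  shows "Z \<in> null_sets M"
proof (rule null_sets_if_outer_measure_of_eq_0)
  show "Z \<subseteq> space M"
    using eventually_happens'[OF sequentially_bot cover] sets by blast
  have bound: "outer_measure_of M Z \<le> ennreal (C * (\<rho> * q) ^ n)"
    if "Z \<subseteq> (\<Union>\<alpha>\<in>J n. E n \<alpha>)" "real (card (J n)) \<le> \<rho> ^ n"
      "\<forall>\<alpha>\<in>J n. outer_measure_of M (E n \<alpha>) \<le> ennreal (C * q ^ n)" for n
  proof -
    have "outer_measure_of M Z \<le> (\<Sum>\<alpha>\<in>J n. outer_measure_of M (E n \<alpha>))"
      using outer_measure_of_mono[OF that(1)] outer_measure_of_UN_le[OF finite sets] by (rule order_trans)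
    also have "\<dots> \<le> (\<Sum>\<alpha>\<in>J n. ennreal (C * q ^ n))"
      using that(3) by (intro sum_mono) blast
    also have "\<dots> = ennreal (real (card (J n)) * (C * q ^ n))"
      using \<open>0 \<le> C\<close> \<open>0 \<le> q\<close> by (simp add: ennreal_mult ennreal_of_nat_eq_real_of_nat)
    also have "\<dots> \<le> ennreal (C * (\<rho> * q) ^ n)"
      using mult_right_mono[OF that(2), of "C * q ^ n"] \<open>0 \<le> C\<close> \<open>0 \<le> q\<close>
      by (intro ennreal_leI) (simp add: power_mult_distrib mult_ac)
    finally show ?thesis .
  qed
  have "\<forall>\<^sub>F n in sequentially. outer_measure_of M Z \<le> ennreal (C * (\<rho> * q) ^ n)"
    using eventually_conj[OF cover eventually_conj[OF card small]]
    by (rule eventually_mono) (use bound in blast)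
  moreover have "(\<lambda>n. ennreal (C * (\<rho> * q) ^ n)) \<longlonglongrightarrow> ennreal 0"
    using \<open>0 \<le> q\<close> \<open>0 \<le> \<rho>\<close> \<open>\<rho> * q < 1\<close>
    by (intro tendsto_ennrealI tendsto_mult_right_zero LIMSEQ_power_zero) simp
  ultimately have "outer_measure_of M Z \<le> ennreal 0"
    by (intro tendsto_lowerbound[where F = sequentially]) simp_all
  then show "outer_measure_of M Z = 0"
    by simp
qed

lemma card_le_power_if_log_growth_less:
  assumes "log_growth k n < ereal (ln \<rho>)" "0 < n" "0 < \<rho>"
  shows "real k \<le> \<rho> ^ n"
proof (cases "k = 0")
  case False
  then have "ln (real k) < real n * ln \<rho>"
    using assms(1,2) by (simp add: log_growth_def divide_less_eq mult.commute)
  also have "\<dots> = ln (\<rho> ^ n)"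
    using assms(3) by (simp add: ln_realpow)
  finally show ?thesis
    using False assms(3) by simp
qed (use assms(3) in simp)

lemma hypothesis_E_subexponential:
  assumes "hypothesis_E X N U f A \<mu>s" "0 < \<delta>0" "0 \<le> q" "q < 1"
  obtains \<delta> \<rho> where "0 < \<delta>" "\<delta> \<le> \<delta>0" "0 \<le> \<rho>" "\<rho> * q < 1"
    "\<forall>\<^sub>F n in sequentially. real (card (J_set X N U f A \<mu>s \<delta> n)) \<le> \<rho> ^ n"
proof -
  define \<rho> where "\<rho> = 2 / (1 + q)"
  have "1 < \<rho>" "\<rho> * q < 1"
    unfolding \<rho>_def using assms(3,4) by (auto simp: field_simps)
  have "\<forall>\<^sub>F \<delta> in at_right 0.
      limsup (\<lambda>n. log_growth (card (J_set X N U f A \<mu>s \<delta> n)) n) < ereal (ln \<rho>)"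
    using assms(1) unfolding hypothesis_E_def
    by (rule order_tendstoD(2)) (simp add: \<open>1 < \<rho>\<close> ln_gt_zero)
  then obtain b where "0 < b" and b: "\<And>\<delta>. 0 < \<delta> \<Longrightarrow> \<delta> < b \<Longrightarrow>
      limsup (\<lambda>n. log_growth (card (J_set X N U f A \<mu>s \<delta> n)) n) < ereal (ln \<rho>)"
    unfolding eventually_at_right_field by auto
  define \<delta> where "\<delta> = min \<delta>0 (b / 2)"
  have "0 < \<delta>" "\<delta> \<le> \<delta>0" "\<delta> < b"
    unfolding \<delta>_def using assms(2) \<open>0 < b\<close> by auto
  have "\<forall>\<^sub>F n in sequentially. real (card (J_set X N U f A \<mu>s \<delta> n)) \<le> \<rho> ^ n"
    using Limsup_lessD[OF b[OF \<open>0 < \<delta>\<close> \<open>\<delta> < b\<close>]] eventually_gt_at_top[of 0]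
    by eventually_elim (use \<open>1 < \<rho>\<close> card_le_power_if_log_growth_less in auto)
  then show ?thesis
    using that[of \<delta> \<rho>] \<open>0 < \<delta>\<close> \<open>\<delta> \<le> \<delta>0\<close> \<open>1 < \<rho>\<close> \<open>\<rho> * q < 1\<close> by simp
qed

definition near_singular_parameters ::
    "'a::metric_space set \<Rightarrow> nat \<Rightarrow> 'm::metric_space set \<Rightarrow> ('m \<Rightarrow> nat \<Rightarrow> 'a set) \<Rightarrow>
      ('m \<Rightarrow> nat \<Rightarrow> 'a \<Rightarrow> 'a) \<Rightarrow> 'm \<Rightarrow> real \<Rightarrow> 'a \<Rightarrow> nat list \<Rightarrow> real \<Rightarrow> 'm set" where
  "near_singular_parameters X N U A phi \<mu>s \<delta> x0 \<alpha> \<epsilon> =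
    {\<mu> \<in> U \<inter> ball \<mu>s \<delta>. singular_set X N (A \<mu>) \<noteq> {} \<and>
      infdist (ifs_comp (phi \<mu>) \<alpha> x0) (singular_set X N (A \<mu>)) \<le> \<epsilon>}"

lemma hypothesis_T_geometric:
  assumes "hypothesis_T X N U f A phi \<mu>s" "0 < lam" "lam < 1"
  obtains x0 \<delta>0 a c where "x0 \<in> X" "0 < \<delta>0" "0 < a" "0 < c"
    "\<And>\<kappa>. 0 < \<kappa> \<Longrightarrow> \<forall>\<^sub>F n in sequentially. \<forall>\<alpha>\<in>J_set X N U f A \<mu>s \<delta>0 n.
      outer_measure_of lebesgue (near_singular_parameters X N U A phi \<mu>s \<delta>0 x0 \<alpha> (\<kappa> * lam ^ n))
        \<le> ennreal (c * \<kappa> powr a * (lam powr a) ^ n)"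
proof -
  obtain x0 \<epsilon>0 \<delta>0 n0 a c where "x0 \<in> X" "0 < \<epsilon>0" "0 < \<delta>0" "0 < a" "0 < c"
    and T: "\<forall>\<epsilon>. 0 < \<epsilon> \<and> \<epsilon> < \<epsilon>0 \<longrightarrow> (\<forall>n\<ge>n0. \<forall>\<alpha>\<in>J_set X N U f A \<mu>s \<delta>0 n.
      outer_measure_of lebesgue (near_singular_parameters X N U A phi \<mu>s \<delta>0 x0 \<alpha> \<epsilon>)
        \<le> ennreal (c * \<epsilon> powr a))"
    using assms(1) unfolding hypothesis_T_def near_singular_parameters_def[symmetric]
    by (elim bexE exE conjE) blast
  moreover have "\<forall>\<^sub>F n in sequentially. \<forall>\<alpha>\<in>J_set X N U f A \<mu>s \<delta>0 n.
      outer_measure_of lebesgue (near_singular_parameters X N U A phi \<mu>s \<delta>0 x0 \<alpha> (\<kappa> * lam ^ n))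
        \<le> ennreal (c * \<kappa> powr a * (lam powr a) ^ n)" if "0 < \<kappa>" for \<kappa>
  proof -
    have "(\<lambda>n. \<kappa> * lam ^ n) \<longlonglongrightarrow> 0"
      using assms(2,3) by (intro tendsto_mult_right_zero LIMSEQ_power_zero) simp
    then have "\<forall>\<^sub>F n in sequentially. \<kappa> * lam ^ n < \<epsilon>0"
      using \<open>0 < \<epsilon>0\<close> by (rule order_tendstoD(2))
    with eventually_ge_at_top[of n0] show ?thesis
    proof eventually_elim
      case (elim n)
      have "(\<kappa> * lam ^ n) powr a = \<kappa> powr a * (lam powr a) ^ n"
        using \<open>0 < \<kappa>\<close> assms(2)
        by (simp add: powr_mult powr_power powr_powr mult.commute flip: powr_realpow)
      moreover have "0 < \<kappa> * lam ^ n"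
        using \<open>0 < \<kappa>\<close> assms(2) by simp
      ultimately show ?case
        using T[rule_format, of "\<kappa> * lam ^ n" n] elim by (simp add: mult.assoc)
    qed
  qed
  ultimately show ?thesis
    using that by blast
qed

lemma non_asymptotically_periodic_subset_near_singular:
  assumes "compact X" "\<forall>x\<in>X. \<forall>r>0. connected (ball x r \<inter> X)" "0 < lam" "lam < 1"
    and "\<forall>\<mu>\<in>U. pw_contraction X lam N (f \<mu>) (A \<mu>) (phi \<mu>)"
    and "x0 \<in> X" "n \<ge> 1" "lam ^ n * diameter X < (1 - lam) * r"
  shows "{\<mu> \<in> U \<inter> ball \<mu>s \<delta>. \<not> asymptotically_periodic X (f \<mu>)
            (regular_points X (f \<mu>) (singular_set X N (A \<mu>)))}
    \<subseteq> (\<Union>\<alpha>\<in>J_set X N U f A \<mu>s \<delta> n. near_singular_parameters X N U A phi \<mu>s \<delta> x0 \<alpha> r)"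
proof clarify
  fix \<mu> assume \<mu>: "\<mu> \<in> U" "\<mu> \<in> ball \<mu>s \<delta>"
    and "\<not> asymptotically_periodic X (f \<mu>) (regular_points X (f \<mu>) (singular_set X N (A \<mu>)))"
  then obtain \<alpha> where "\<alpha> \<in> itineraries X N (f \<mu>) (A \<mu>) n" "singular_set X N (A \<mu>) \<noteq> {}"
    "infdist (ifs_comp (phi \<mu>) \<alpha> x0) (singular_set X N (A \<mu>)) \<le> r"
    using itinerary_near_singular_if_not_asymptotically_periodic assms by (metis (no_types, lifting))
  with \<mu> show "\<mu> \<in> (\<Union>\<alpha>\<in>J_set X N U f A \<mu>s \<delta> n. near_singular_parameters X N U A phi \<mu>s \<delta> x0 \<alpha> r)"
    unfolding J_set_def near_singular_parameters_def by blast
qed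

lemma null_sets_non_asymptotically_periodic:
  assumes "compact X" "\<forall>x\<in>X. \<forall>r>0. connected (ball x r \<inter> X)" "0 < lam" "lam < 1"
    and "\<forall>\<mu>\<in>U. pw_contraction X lam N (f \<mu>) (A \<mu>) (phi \<mu>)"
    and "x0 \<in> X" "\<delta> \<le> \<delta>0" "diameter X < (1 - lam) * \<kappa>"
    and card: "\<forall>\<^sub>F n in sequentially. real (card (J_set X N U f A \<mu>s \<delta> n)) \<le> \<rho> ^ n"
    and small: "\<forall>\<^sub>F n in sequentially. \<forall>\<alpha>\<in>J_set X N U f A \<mu>s \<delta>0 n.
      outer_measure_of lebesgue (near_singular_parameters X N U A phi \<mu>s \<delta>0 x0 \<alpha> (\<kappa> * lam ^ n))
        \<le> ennreal (C * q ^ n)"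
    and "0 \<le> C" "0 \<le> q" "0 \<le> \<rho>" "\<rho> * q < 1"
  shows "{\<mu> \<in> U \<inter> ball \<mu>s \<delta>. \<not> asymptotically_periodic X (f \<mu>)
            (regular_points X (f \<mu>) (singular_set X N (A \<mu>)))} \<in> null_sets lebesgue"
    (is "?bad \<in> _")
proof (rule completion.null_sets_if_exponentially_small_cover[OF _ finite_J_set _ card])
  let ?E = "\<lambda>\<delta>' n \<alpha>. near_singular_parameters X N U A phi \<mu>s \<delta>' x0 \<alpha> (\<kappa> * lam ^ n)"
  show "\<forall>\<^sub>F n in sequentially. ?bad \<subseteq> (\<Union>\<alpha>\<in>J_set X N U f A \<mu>s \<delta> n. ?E \<delta>0 n \<alpha>)"
    using eventually_ge_at_top[of 1]
  proof eventually_elim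
    case (elim n)
    have "lam ^ n * diameter X < (1 - lam) * (\<kappa> * lam ^ n)"
      using mult_strict_left_mono[OF assms(8), of "lam ^ n"] assms(3) by (simp add: mult_ac)
    then have "?bad \<subseteq> (\<Union>\<alpha>\<in>J_set X N U f A \<mu>s \<delta> n. ?E \<delta> n \<alpha>)"
      by (rule non_asymptotically_periodic_subset_near_singular[OF assms(1-6) elim])
    also have "\<dots> \<subseteq> (\<Union>\<alpha>\<in>J_set X N U f A \<mu>s \<delta> n. ?E \<delta>0 n \<alpha>)"
      using \<open>\<delta> \<le> \<delta>0\<close> unfolding near_singular_parameters_def by auto
    finally show ?case .
  qed
  show "\<forall>\<^sub>F n in sequentially. \<forall>\<alpha>\<in>J_set X N U f A \<mu>s \<delta> n.
      outer_measure_of lebesgue (?E \<delta>0 n \<alpha>) \<le> ennreal (C * q ^ n)"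
    using small J_set_mono[OF \<open>\<delta> \<le> \<delta>0\<close>] by (elim eventually_mono) blast
qed (use assms(10-) in auto)

theorem theorem2p9:
  fixes X :: "'a::metric_space set" and lam :: real and N :: nat
    and U :: "'m::euclidean_space set" and \<mu>s :: 'm
    and f :: "'m \<Rightarrow> 'a \<Rightarrow> 'a" and A :: "'m \<Rightarrow> nat \<Rightarrow> 'a set" and phi :: "'m \<Rightarrow> nat \<Rightarrow> 'a \<Rightarrow> 'a"
  assumes "compact X"
    and "\<forall>x\<in>X. \<forall>r>0. connected (ball x r \<inter> X)"
    and "0 < lam" and "lam < 1"
    and "U \<in> sets lebesgue" and "emeasure lebesgue U > 0"
    and "\<forall>\<mu>\<in>U. pw_contraction X lam N (f \<mu>) (A \<mu>) (phi \<mu>)"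
    and "\<mu>s \<in> U"
    and "hypothesis_E X N U f A \<mu>s"
    and "hypothesis_T X N U f A phi \<mu>s"
  shows "\<exists>\<delta>>0. AE \<mu> in lebesgue. \<mu> \<in> U \<inter> ball \<mu>s \<delta> \<longrightarrow>
           asymptotically_periodic X (f \<mu>)
             (regular_points X (f \<mu>) (singular_set X N (A \<mu>)))"
proof -
  obtain x0 \<delta>0 a c where "x0 \<in> X" "0 < \<delta>0" "0 < a" "0 < c" and small: "\<And>\<kappa>. 0 < \<kappa> \<Longrightarrow>
      \<forall>\<^sub>F n in sequentially. \<forall>\<alpha>\<in>J_set X N U f A \<mu>s \<delta>0 n.
        outer_measure_of lebesgue (near_singular_parameters X N U A phi \<mu>s \<delta>0 x0 \<alpha> (\<kappa> * lam ^ n))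
          \<le> ennreal (c * \<kappa> powr a * (lam powr a) ^ n)"
    using hypothesis_T_geometric[OF assms(10,3,4)] by blast
  have "0 \<le> lam powr a" "lam powr a < 1"
    using assms(3,4) powr_less_mono2[OF \<open>0 < a\<close>, of lam 1] by auto
  then obtain \<delta> \<rho> where "0 < \<delta>" "\<delta> \<le> \<delta>0" "0 \<le> \<rho>" "\<rho> * lam powr a < 1" and card:
      "\<forall>\<^sub>F n in sequentially. real (card (J_set X N U f A \<mu>s \<delta> n)) \<le> \<rho> ^ n"
    using hypothesis_E_subexponential[OF assms(9) \<open>0 < \<delta>0\<close>] by blast
  define \<kappa> where "\<kappa> = (diameter X + 1) / (1 - lam)"
  have "0 \<le> diameter X"
    using assms(1) by (simp add: compact_imp_bounded diameter_ge_0)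
  then have "0 < \<kappa>" "diameter X < (1 - lam) * \<kappa>"
    unfolding \<kappa>_def using assms(4) by auto
  then have "{\<mu> \<in> U \<inter> ball \<mu>s \<delta>. \<not> asymptotically_periodic X (f \<mu>)
      (regular_points X (f \<mu>) (singular_set X N (A \<mu>)))} \<in> null_sets lebesgue"
    using null_sets_non_asymptotically_periodic[OF assms(1-4,7) \<open>x0 \<in> X\<close> \<open>\<delta> \<le> \<delta>0\<close> _
        card small[OF \<open>0 < \<kappa>\<close>]] \<open>0 < c\<close> \<open>0 \<le> lam powr a\<close> \<open>0 \<le> \<rho>\<close> \<open>\<rho> * lam powr a < 1\<close>
    by simp
  then show ?thesis
    using \<open>0 < \<delta>\<close> by (intro exI[of _ \<delta>] conjI AE_I') auto
qed

end
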